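(* Let $t_1, t_2 \in \mathsf{Topo}$, let $f$ be an embedding of $t_1$ in $t_2$, and let $q \in \mathsf{PIFOTree}(t_1)$. Then $q \preceq \widehat f(q)$.
   Context: Fix a set $\mathsf{Pkt}$ of packets and a totally ordered set $\mathsf{Rk}$ of ranks (a smaller rank is more favorable). PIFOs: for a set $S$, a PIFO over $S$ is a finite sequence of pairs $(s,r) \in S \times \mathsf{Rk}$ kept in insertion order; $\mathsf{PIFO}(S)$ is the set of these. $\mathsf{push}_{\mathsf{PIFO}}(p,s,r)$ appends $(s,r)$ to $p$. $\mathsf{pop}_{\mathsf{PIFO}}(p)$ is undefined if $p$ is empty; otherwise it removes the entry $(s,r)$ of $p$ with minimal rank (earliest-inserted among ties) and returns $(s,p')$ with $p'$ the rest. Topologies: $\mathsf{Topo}$ is the smallest set with $* \in \mathsf{Topo}$ and $\mathsf{Node}(\vec t) \in \mathsf{Topo}$ for every $n \in \mathbb{N}$, $\vec t \in \mathsf{Topo}^n$; $\vec t[i]$ is the $i$-th entry. PIFO trees: $\mathsf{Leaf}(p) \in \mathsf{PIFOTree}( * )$ for $p \in \mathsf{PIFO}(\mathsf{Pkt})$; $\mathsf{Internal}(\vec q, p) \in \mathsf{PIFOTree}(\mathsf{Node}(\vec t))$ whenever $\vec t \in \mathsf{Topo}^n$, $p \in \mathsf{PIFO}(\{1,\dots,n\})$, $\vec q[i] \in \mathsf{PIFOTree}(\vec t[i])$. $\vec q[q'/i]$ is $\vec q$ with $i$-th entry replaced by $q'$. pop (partial): $\mathsf{pop}(\mathsf{Leaf}(p))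 = (pkt,\mathsf{Leaf}(p'))$ if $\mathsf{pop}_{\mathsf{PIFO}}(p)=(pkt,p')$; $\mathsf{pop}(\mathsf{Internal}(\vec q,p)) = (pkt,\mathsf{Internal}(\vec q[q'/i],p'))$ if $\mathsf{pop}_{\mathsf{PIFO}}(p)=(i,p')$ and $\mathsf{pop}(\vec q[i]) = (pkt,q')$; undefined otherwise. Paths: $\mathsf{Path}( * ) = \mathsf{Rk}$; $\mathsf{Path}(\mathsf{Node}(\vec t))$ consists of $(i,r)::pt$ with $1\le i\le n$, $r\in\mathsf{Rk}$, $pt\in\mathsf{Path}(\vec t[i])$. push: $\mathsf{push}(\mathsf{Leaf}(p),pkt,r) = \mathsf{Leaf}(\mathsf{push}_{\mathsf{PIFO}}(p,pkt,r))$; $\mathsf{push}(\mathsf{Internal}(\vec q,p),pkt,(i,r)::pt) = \mathsf{Internal}(\vec q[\mathsf{push}(\vec q[i],pkt,pt)/i],\mathsf{push}_{\mathsf{PIFO}}(p,i,r))$. Simulation: a relation $R \subseteq \mathsf{PIFOTree}(t_1)\times\mathsf{PIFOTree}(t_2)$ is a simulation if for all $pkt$ and $q_1 \mathrel{R} q_2$: (1) if $\mathsf{pop}(q_1)$ is undefined so is $\mathsf{pop}(q_2)$; (2) if $\mathsf{pop}(q_1)=(pkt,q_1')$ then $\mathsf{pop}(q_2)=(pkt,q_2')$ with $q_1' \mathrel{R} q_2'$; (3) for every $pt_1\in\mathsf{Path}(t_1)$ there is $pt_2 \in \mathsf{Path}(t_2)$ with $\mathsf{push}(q_1,pkt,pt_1)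 \mathrel{R} \mathsf{push}(q_2,pkt,pt_2)$. $q_1 \preceq q_2$ means some simulation relates them. Addresses: $\mathsf{Addr}(t) \subseteq \mathbb{N}^*$ is the smallest set with $\epsilon \in \mathsf{Addr}(t)$ and $i\cdot\alpha \in \mathsf{Addr}(\mathsf{Node}(\vec t))$ for $1\le i\le n$, $\alpha \in \mathsf{Addr}(\vec t[i])$. Subtrees: $t/\epsilon = t$, $\mathsf{Node}(\vec t)/(i\cdot\alpha) = \vec t[i]/\alpha$. An embedding of $t_1$ in $t_2$ is an injective $f:\mathsf{Addr}(t_1)\to\mathsf{Addr}(t_2)$ with $f(\epsilon)=\epsilon$, $t_2/f(\alpha) = *$ whenever $t_1/\alpha = *$, and: $\alpha$ is a prefix of $\alpha'$ iff $f(\alpha)$ is a prefix of $f(\alpha')$. If $t_1 = *$ then $t_2 = *$; if $t_1 = \mathsf{Node}(\vec t_1)$ then for each $i$ the map $f_i$ defined by $f(i\cdot\alpha) = f(i)\cdot f_i(\alpha)$ is an embedding of $t_1/i$ in $t_2/f(i)$. Lifting $\widehat f:\mathsf{PIFOTree}(t_1)\to\mathsf{PIFOTree}(t_2)$, by recursion on $t_1$: if $t_1 = *$, $\widehat f(q) = q$. If $t_1 = \mathsf{Node}(\vec t_1)$ with $n$ children and $q = \mathsf{Internal}(\vec q,p)$, define for each address $\alpha$ of $t_2$ that is a prefix of some $f(i)$ a tree $\widehat f(q)_\alpha \in \mathsf{PIFOTree}(t_2/\alpha)$, from longer to shorter $\alpha$: if $\alpha = f(i)$, then $\widehat f(q)_\alpha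 = \widehat{f_i}(\vec q[i])$; otherwise $t_2/\alpha$ is a node with some $m$ children, and $\widehat f(q)_\alpha = \mathsf{Internal}(\vec q_\alpha, p_\alpha)$ where $\vec q_\alpha[j] = \widehat f(q)_{\alpha\cdot j}$ if $\alpha\cdot j$ is a prefix of some $f(i)$, and otherwise $\vec q_\alpha[j]$ is the tree of topology $t_2/(\alpha\cdot j)$ all of whose PIFOs are empty; and $p_\alpha$ is obtained from $p$ by replacing each entry $(i,r)$ with $(j,r)$ where $j$ is such that $\alpha\cdot j$ is a prefix of $f(i)$, deleting entries $(i,r)$ for which no such $j$ exists, and keeping the order of entries. Finally $\widehat f(q) = \widehat f(q)_\epsilon$. *)

theory Defs
  imports Main "HOL-Library.Sublist"
begin

text \<open>A PIFO over S is a list of (element, rank) pairs in insertion order.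
  Ranks come from a linear order; smaller rank = more favorable.\<close>

type_synonym ('s, 'r) pifo = "('s \<times> 'r) list"

definition pifo_push :: "('s, 'r) pifo \<Rightarrow> 's \<Rightarrow> 'r \<Rightarrow> ('s, 'r) pifo" where
  "pifo_push p s r = p @ [(s, r)]"

definition pifo_pop :: "('s, 'r::linorder) pifo \<Rightarrow> ('s \<times> ('s, 'r) pifo) option" where
  "pifo_pop p = (if p = [] then None else
     (let k = (LEAST k. k < length p \<and> (\<forall>x\<in>set p. snd (p ! k) \<le> snd x))
      in Some (fst (p ! k), take k p @ drop (Suc k) p)))"

datatype topo = Star | Node "topo list"

section \<open>PIFO trees (children indexed from 0)\<close>

datatype ('p, 'r) ptree = Leaf "('p, 'r) pifo" | Internal "('p, 'r) ptree list" "(nat, 'r) pifo"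

lemma mem_size_less: "x \<in> set xs \<Longrightarrow> size x < Suc (size_list size xs)"
  by (simp add: less_Suc_eq_le size_list_estimation')

lemma zip_size_less: "(i, x) \<in> set (zip ns xs) \<Longrightarrow> size x < Suc (size_list size xs)"
  by (meson mem_size_less set_zip_rightD)

lemma zip2_size_less: "(i, x, y) \<in> set (zip ns (zip xs ys)) \<Longrightarrow> size x < Suc (size_list size xs)"
  by (meson mem_size_less set_zip_rightD set_zip_leftD)

lemma size_nth_le: "i < length qs \<Longrightarrow> g (qs ! i) \<le> size_list g qs"
  by (metis nth_mem size_list_estimation' order_refl)

function wf_tree :: "topo \<Rightarrow> ('p, 'r) ptree \<Rightarrow> bool" where
  "wf_tree Star (Leaf p) = True"
| "wf_tree (Node ts) (Internal qs p) =
     (length qs = length ts \<and> (\<forall>i<length ts. wf_tree (ts ! i) (qs ! i)) \<and>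
      (\<forall>(i, r)\<in>set p. i < length ts))"
| "wf_tree Star (Internal qs p) = False"
| "wf_tree (Node ts) (Leaf p) = False"
  by pat_completeness auto
termination
  by (relation "measure (\<lambda>(t, _). size t)") (auto dest!: size_nth_le[where g = size])

function pop :: "('p, 'r::linorder) ptree \<Rightarrow> ('p \<times> ('p, 'r) ptree) option" where
  "pop (Leaf p) = (case pifo_pop p of None \<Rightarrow> None | Some (x, p') \<Rightarrow> Some (x, Leaf p'))"
| "pop (Internal qs p) = (case pifo_pop p of None \<Rightarrow> None
     | Some (i, p') \<Rightarrow> if i < length qs then
         (case pop (qs ! i) of None \<Rightarrow> None
          | Some (x, q') \<Rightarrow> Some (x, Internal (qs[i := q']) p'))
       else None)"
  by pat_completeness auto
termination
  by (relation "measure size") (auto dest!: size_nth_le[where g = size])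

datatype 'r path = PEnd 'r | PStep nat 'r "'r path"

fun is_path :: "topo \<Rightarrow> 'r path \<Rightarrow> bool" where
  "is_path Star (PEnd r) = True"
| "is_path (Node ts) (PStep i r pt) = (i < length ts \<and> is_path (ts ! i) pt)"
| "is_path _ _ = False"

function push :: "('p, 'r) ptree \<Rightarrow> 'p \<Rightarrow> 'r path \<Rightarrow> ('p, 'r) ptree" where
  "push (Leaf p) x (PEnd r) = Leaf (pifo_push p x r)"
| "push (Internal qs p) x (PStep i r pt) =
     (if i < length qs then Internal (qs[i := push (qs ! i) x pt]) (pifo_push p i r)
      else Internal qs p)"
| "push (Leaf p) x (PStep i r pt) = Leaf p"
| "push (Internal qs p) x (PEnd r) = Internal qs p"
  by pat_completeness auto
termination
  by (relation "measure (\<lambda>(q, _, _). size q)") (auto dest!: size_nth_le[where g = size])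

definition simulation :: "topo \<Rightarrow> topo \<Rightarrow> (('p, 'r::linorder) ptree \<times> ('p, 'r) ptree) set \<Rightarrow> bool" where
  "simulation t1 t2 R \<longleftrightarrow>
     (\<forall>(q1, q2)\<in>R. wf_tree t1 q1 \<and> wf_tree t2 q2) \<and>
     (\<forall>(q1, q2)\<in>R.
        (pop q1 = None \<longrightarrow> pop q2 = None) \<and>
        (\<forall>x q1'. pop q1 = Some (x, q1') \<longrightarrow>
            (\<exists>q2'. pop q2 = Some (x, q2') \<and> (q1', q2') \<in> R)) \<and>
        (\<forall>x pt1. is_path t1 pt1 \<longrightarrow>
            (\<exists>pt2. is_path t2 pt2 \<and> (push q1 x pt1, push q2 x pt2) \<in> R)))"

definition simulated_by :: "topo \<Rightarrow> topo \<Rightarrow> ('p, 'r::linorder) ptree \<Rightarrow> ('p, 'r) ptree \<Rightarrow> bool" where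
  "simulated_by t1 t2 q1 q2 \<longleftrightarrow> (\<exists>R. simulation t1 t2 R \<and> (q1, q2) \<in> R)"

section \<open>Addresses, subtrees, embeddings (child indices from 0)\<close>

fun valid_addr :: "topo \<Rightarrow> nat list \<Rightarrow> bool" where
  "valid_addr t [] = True"
| "valid_addr Star (i # a) = False"
| "valid_addr (Node ts) (i # a) = (i < length ts \<and> valid_addr (ts ! i) a)"

definition addr :: "topo \<Rightarrow> nat list set" where
  "addr t = {a. valid_addr t a}"

fun subtree :: "topo \<Rightarrow> nat list \<Rightarrow> topo" where
  "subtree t [] = t"
| "subtree (Node ts) (i # a) = subtree (ts ! i) a"
| "subtree Star (i # a) = Star"

definition embedding :: "topo \<Rightarrow> topo \<Rightarrow> (nat list \<Rightarrow> nat list) \<Rightarrow> bool" where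
  "embedding t1 t2 f \<longleftrightarrow>
     f ` addr t1 \<subseteq> addr t2 \<and>
     inj_on f (addr t1) \<and>
     f [] = [] \<and>
     (\<forall>a\<in>addr t1. subtree t1 a = Star \<longrightarrow> subtree t2 (f a) = Star) \<and>
     (\<forall>a\<in>addr t1. \<forall>a'\<in>addr t1. prefix a a' \<longleftrightarrow> prefix (f a) (f a'))"

text \<open>The sub-embedding f_i, determined by f(i.a) = f(i).f_i(a).\<close>
definition sub_emb :: "(nat list \<Rightarrow> nat list) \<Rightarrow> nat \<Rightarrow> nat list \<Rightarrow> nat list" where
  "sub_emb f i = (\<lambda>a. drop (length (f [i])) (f (i # a)))"

fun empty_tree :: "topo \<Rightarrow> ('p, 'r) ptree" where
  "empty_tree Star = Leaf []"
| "empty_tree (Node ts) = Internal (map empty_tree ts) []"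

definition reindex :: "(nat list \<Rightarrow> nat list) \<Rightarrow> nat list \<Rightarrow> (nat, 'r) pifo \<Rightarrow> (nat, 'r) pifo" where
  "reindex f a p = [((THE j. prefix (a @ [j]) (f [i])), r). (i, r) \<leftarrow> p, \<exists>j. prefix (a @ [j]) (f [i])]"

text \<open>build Ls f n p u a computes the tree (hat f)(q)_a, where u = t2/a, q = Internal qs p has n
  children, and Ls ! i is the already lifted child (hat f_i)(qs ! i).\<close>
function build :: "('p, 'r) ptree list \<Rightarrow> (nat list \<Rightarrow> nat list) \<Rightarrow> nat \<Rightarrow> (nat, 'r) pifo
               \<Rightarrow> topo \<Rightarrow> nat list \<Rightarrow> ('p, 'r) ptree" where
  "build Ls f n p u a =
     (if \<exists>i<n. f [i] = a then Ls ! (THE i. i < n \<and> f [i] = a)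
      else (case u of
              Star \<Rightarrow> Leaf []
            | Node us \<Rightarrow> Internal
                 (map (\<lambda>(j, uj). if \<exists>i<n. prefix (a @ [j]) (f [i])
                                  then build Ls f n p uj (a @ [j])
                                  else empty_tree uj)
                      (zip [0..<length us] us))
                 (reindex f a p)))"
  by pat_completeness auto
termination
  by (relation "measure (\<lambda>(_, _, _, _, u, _). size u)") (auto intro: zip_size_less zip2_size_less)

declare build.simps [simp del]

function lift :: "topo \<Rightarrow> topo \<Rightarrow> (nat list \<Rightarrow> nat list) \<Rightarrow> ('p, 'r) ptree \<Rightarrow> ('p, 'r) ptree" where
  "lift Star t2 f q = q"
| "lift (Node ts) t2 f (Leaf p) = Leaf p"
| "lift (Node ts) t2 f (Internal qs p) =
     build (map (\<lambda>(i, ti, qi). lift ti (subtree t2 (f [i])) (sub_emb f i) qi)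
                (zip [0..<length ts] (zip ts qs)))
           f (length ts) p t2 []"
  by pat_completeness auto
termination
  by (relation "measure (\<lambda>(t1, _, _, _). size t1)") (auto intro: zip_size_less zip2_size_less)

end

theory Submission
  imports Defs
begin

text \<open>The lifting commutes with pop and push, so its graph on well-formed trees is a simulation.
  On the way from the root of t2 to f(i), every PIFO of the lifted tree holds, in the original
  order and with the original ranks, exactly those entries of the root PIFO whose child is embedded
  below that node. Hence a pop of the lifted tree walks down to f(i) precisely when the original pop
  selects child i, and there it pops the lifted child. A push along (i, r) :: pt is matched by
  pushing rank r at every node on the way to f(i), followed by a path that matches pt in the lifted
  child.\<close>

lemma pifo_pop_eq_None_iff [simp]: "pifo_pop p = None \<longleftrightarrow> p = []"
  by (simp add: pifo_pop_def Let_def)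

lemma pifo_pop_Nil [simp]: "pifo_pop [] = None"
  by simp

lemma pifo_pop_append_Cons:
  assumes "\<forall>x\<in>set xs. r < snd x" and "\<forall>y\<in>set ys. r \<le> snd y"
  shows "pifo_pop (xs @ (s, r) # ys) = Some (s, xs @ ys)"
proof -
  let ?p = "xs @ (s, r) # ys"
  have "(LEAST k. k < length ?p \<and> (\<forall>x\<in>set ?p. snd (?p ! k) \<le> snd x)) = length xs"
  proof (rule Least_equality)
    show "length xs < length ?p \<and> (\<forall>x\<in>set ?p. snd (?p ! length xs) \<le> snd x)"
      using assms by (auto intro: less_imp_le)
  next
    fix k assume k: "k < length ?p \<and> (\<forall>x\<in>set ?p. snd (?p ! k) \<le> snd x)"
    show "length xs \<le> k"
    proof (rule ccontr)
      assume "\<not> length xs \<le> k"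
      then have "?p ! k \<in> set xs" by (simp add: nth_append)
      with k assms(1) show False by fastforce
    qed
  qed
  then show ?thesis unfolding pifo_pop_def Let_def by simp
qed

lemma pifo_pop_SomeE:
  assumes "pifo_pop p = Some (s, p')"
  obtains xs r ys where "p = xs @ (s, r) # ys" and "\<forall>x\<in>set xs. r < snd x"
    and "\<forall>y\<in>set ys. r \<le> snd y" and "p' = xs @ ys"
proof -
  have "p \<noteq> []" using assms by (auto simp: pifo_pop_def)
  define P where "P k \<longleftrightarrow> k < length p \<and> (\<forall>x\<in>set p. snd (p ! k) \<le> snd x)" for k
  define k where "k = (LEAST k. P k)"
  have "\<exists>k. P k"
  proof -
    obtain m where "m \<in> snd ` set p" "\<forall>x\<in>set p. m \<le> snd x"
      using ex_min_if_finite[of "snd ` set p"] \<open>p \<noteq> []\<close> by (auto simp: not_less)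
    then obtain k where "k < length p" "snd (p ! k) = m" by (auto simp: in_set_conv_nth)
    with \<open>\<forall>x\<in>set p. m \<le> snd x\<close> show ?thesis unfolding P_def by auto
  qed
  then have k: "P k" unfolding k_def by (rule LeastI_ex)
  have s: "s = fst (p ! k)" and p': "p' = take k p @ drop (Suc k) p"
    using assms \<open>p \<noteq> []\<close> unfolding pifo_pop_def Let_def k_def P_def by auto
  show ?thesis
  proof (rule that)
    show "p = take k p @ (s, snd (p ! k)) # drop (Suc k) p"
      using k s unfolding P_def by (simp add: id_take_nth_drop)
    show "\<forall>x\<in>set (take k p). snd (p ! k) < snd x"
    proof
      fix x assume "x \<in> set (take k p)"
      then obtain k' where k': "k' < k" "x = p ! k'"
        using k unfolding P_def by (auto simp: in_set_conv_nth)
      have "\<not> P k'" using k'(1) unfolding k_def by (rule not_less_Least)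
      then have "\<not> snd (p ! k') \<le> snd (p ! k)"
        using k k' unfolding P_def by (auto intro: order_trans)
      then show "snd (p ! k) < snd x" using k' by simp
    qed
    show "\<forall>y\<in>set (drop (Suc k) p). snd (p ! k) \<le> snd y"
      using k unfolding P_def by (auto dest: in_set_dropD)
  qed (rule p')
qed

lemma wf_tree_empty_tree: "wf_tree u (empty_tree u)"
  by (induction u) auto

lemma wf_tree_pop: "wf_tree t q \<Longrightarrow> pop q = Some (x, q') \<Longrightarrow> wf_tree t q'"
proof (induction t arbitrary: q q')
  case Star
  then show ?case by (cases q) (auto split: option.splits)
next
  case (Node ts)
  then obtain qs p where q: "q = Internal qs p" by (cases q) auto
  with Node.prems obtain i p' qi' where pp: "pifo_pop p = Some (i, p')" and i: "i < length qs"
    and pi: "pop (qs ! i) = Some (x, qi')" and q': "q' = Internal (qs[i := qi']) p'"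
    by (auto split: option.splits if_splits)
  have wf: "length qs = length ts" "\<forall>k<length ts. wf_tree (ts ! k) (qs ! k)"
    "\<forall>(k, r)\<in>set p. k < length ts"
    using Node.prems(1) q by auto
  have "wf_tree (ts ! i) qi'" using Node.IH[OF nth_mem] wf pi i by auto
  moreover have "set p' \<subseteq> set p" using pp by (rule pifo_pop_SomeE) auto
  ultimately show ?case using q' wf i by (auto simp: nth_list_update)
qed

lemma wf_tree_push: "wf_tree t q \<Longrightarrow> is_path t pt \<Longrightarrow> wf_tree t (push q x pt)"
proof (induction t arbitrary: q pt)
  case Star
  then show ?case by (cases q; cases pt) (auto simp: pifo_push_def)
next
  case (Node ts)
  then obtain qs p i r pt' where q: "q = Internal qs p" and pt: "pt = PStep i r pt'"
    by (cases q; cases pt) auto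
  have wf: "length qs = length ts" "\<forall>k<length ts. wf_tree (ts ! k) (qs ! k)"
    "\<forall>(k, r)\<in>set p. k < length ts"
    using Node.prems(1) q by auto
  have i: "i < length ts" "is_path (ts ! i) pt'" using Node.prems(2) pt by auto
  have "wf_tree (ts ! i) (push (qs ! i) x pt')" using Node.IH[OF nth_mem] wf i by auto
  then show ?case using q pt wf i by (auto simp: nth_list_update pifo_push_def)
qed

lemma simulated_by_commuting_map:
  fixes h :: "('p, 'r::linorder) ptree \<Rightarrow> ('p, 'r) ptree"
  assumes wf: "\<And>q. wf_tree t1 q \<Longrightarrow> wf_tree t2 (h q)"
    and pop: "\<And>q. wf_tree t1 q \<Longrightarrow> pop (h q) = map_option (apsnd h) (pop q)"
    and push: "\<And>q x pt. wf_tree t1 q \<Longrightarrow> is_path t1 pt \<Longrightarrow>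
      \<exists>pt2. is_path t2 pt2 \<and> push (h q) x pt2 = h (push q x pt)"
    and q: "wf_tree t1 q"
  shows "simulated_by t1 t2 q (h q)"
proof -
  define R where "R = {(q, h q) | q. wf_tree t1 q}"
  have "(pop q = None \<longrightarrow> pop (h q) = None) \<and>
      (\<forall>x q'. pop q = Some (x, q') \<longrightarrow> (\<exists>q2'. pop (h q) = Some (x, q2') \<and> (q', q2') \<in> R)) \<and>
      (\<forall>x pt. is_path t1 pt \<longrightarrow> (\<exists>pt2. is_path t2 pt2 \<and> (push q x pt, push (h q) x pt2) \<in> R))"
    if q: "wf_tree t1 q" for q
    using pop[OF q] push[OF q] wf_tree_pop[OF q] wf_tree_push[OF q] by (fastforce simp: R_def)
  then have "simulation t1 t2 R" unfolding simulation_def by (auto simp: R_def wf)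
  with q show ?thesis unfolding simulated_by_def R_def by blast
qed

lemma subtree_Star [simp]: "subtree Star a = Star"
  by (cases a) auto

lemma subtree_append: "subtree t (a @ b) = subtree (subtree t a) b"
  by (induction t a rule: subtree.induct) auto

lemma valid_addr_append: "valid_addr t (a @ b) \<longleftrightarrow> valid_addr t a \<and> valid_addr (subtree t a) b"
  by (induction t a rule: valid_addr.induct) auto

lemma valid_addr_append_ConsE:
  assumes "valid_addr t (a @ j # b)"
  obtains us where "subtree t a = Node us" and "j < length us"
  using assms by (cases "subtree t a") (auto simp: valid_addr_append)

lemma prefix_snoc_unique: "prefix (a @ [j]) x \<Longrightarrow> prefix (a @ [j']) x \<Longrightarrow> j = j'"
  by (auto simp: prefix_def)

lemma the_prefix_snoc: "prefix (a @ [j]) x \<Longrightarrow> (THE j. prefix (a @ [j]) x) = j"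
  by (blast intro: the_equality dest: prefix_snoc_unique)

lemma reindex_Nil [simp]: "reindex f a [] = []"
  by (simp add: reindex_def)

lemma reindex_append [simp]: "reindex f a (p @ p') = reindex f a p @ reindex f a p'"
  by (simp add: reindex_def)

lemma reindex_Cons_prefix:
  "prefix (a @ [j]) (f [i]) \<Longrightarrow> reindex f a ((i, r) # p) = (j, r) # reindex f a p"
  by (auto simp: reindex_def the_prefix_snoc)

lemma in_set_reindexD:
  "(j, r) \<in> set (reindex f a p) \<Longrightarrow> \<exists>i. (i, r) \<in> set p \<and> prefix (a @ [j]) (f [i])"
  by (auto simp: reindex_def the_prefix_snoc)

lemma reindex_filter:
  assumes "\<And>i j. prefix (a @ [j]) (f [i]) \<Longrightarrow> Q i"
  shows "reindex f a (filter (\<lambda>(i, r). Q i) p) = reindex f a p"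
  using assms by (induction p) (auto simp: reindex_def)

lemma reindex_pop:
  assumes "pifo_pop p = Some (i, p')" and "prefix (a @ [j]) (f [i])"
  shows "pifo_pop (reindex f a p) = Some (j, reindex f a p')"
proof -
  obtain xs r ys where p: "p = xs @ (i, r) # ys" and p': "p' = xs @ ys"
    and xs: "\<forall>x\<in>set xs. r < snd x" and ys: "\<forall>y\<in>set ys. r \<le> snd y"
    using assms(1) by (rule pifo_pop_SomeE)
  have "\<forall>x\<in>set (reindex f a xs). r < snd x" "\<forall>y\<in>set (reindex f a ys). r \<le> snd y"
    using xs ys by (auto dest!: in_set_reindexD)
  then show ?thesis
    unfolding p p' by (simp add: reindex_Cons_prefix[of a j f i, OF assms(2)] pifo_pop_append_Cons)
qed

section \<open>Trees built by the lifting\<close>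

definition child_images_antichain :: "(nat list \<Rightarrow> nat list) \<Rightarrow> nat \<Rightarrow> topo \<Rightarrow> bool" where
  "child_images_antichain f n t2 \<longleftrightarrow>
     (\<forall>i<n. valid_addr t2 (f [i]) \<and> f [i] \<noteq> []) \<and>
     (\<forall>i<n. \<forall>i'<n. prefix (f [i]) (f [i']) \<longrightarrow> i = i')"

definition build_children :: "('p, 'r) ptree list \<Rightarrow> (nat list \<Rightarrow> nat list) \<Rightarrow> nat
    \<Rightarrow> (nat, 'r) pifo \<Rightarrow> topo list \<Rightarrow> nat list \<Rightarrow> ('p, 'r) ptree list" where
  "build_children Ls f n p us a =
     map (\<lambda>(j, uj). if \<exists>i<n. prefix (a @ [j]) (f [i]) then build Ls f n p uj (a @ [j])
                   else empty_tree uj)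
       (zip [0..<length us] us)"

lemma length_build_children [simp]: "length (build_children Ls f n p us a) = length us"
  by (simp add: build_children_def)

lemma nth_build_children:
  "j < length us \<Longrightarrow> build_children Ls f n p us a ! j =
     (if \<exists>i<n. prefix (a @ [j]) (f [i]) then build Ls f n p (us ! j) (a @ [j])
      else empty_tree (us ! j))"
  by (simp add: build_children_def)

lemma build_child_image:
  assumes "child_images_antichain f n t2" and "i < n"
  shows "build Ls f n p u (f [i]) = Ls ! i"
proof -
  have "(THE i'. i' < n \<and> f [i'] = f [i]) = i"
    using assms unfolding child_images_antichain_def by (intro the_equality) auto
  with assms(2) show ?thesis by (subst build.simps) auto
qed

lemma build_Node:
  "\<forall>i<n. f [i] \<noteq> a \<Longrightarrow>
     build Ls f n p (Node us) a = Internal (build_children Ls f n p us a) (reindex f a p)"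
  by (subst build.simps) (auto simp: build_children_def)

lemma build_Star: "\<forall>i<n. f [i] \<noteq> a \<Longrightarrow> build Ls f n p Star a = Leaf []"
  by (subst build.simps) auto

lemma build_cong:
  assumes ac: "child_images_antichain f n t2"
  shows "\<forall>i<n. prefix a (f [i]) \<longrightarrow> Ls ! i = Ls' ! i \<Longrightarrow>
    filter (\<lambda>(i, r). prefix a (f [i])) p = filter (\<lambda>(i, r). prefix a (f [i])) p' \<Longrightarrow>
    build Ls f n p u a = build Ls' f n p' u a"
proof (induction u arbitrary: a)
  case Star
  then show ?case by (cases "\<exists>i<n. f [i] = a") (auto simp: build_child_image[OF ac] build_Star)
next
  case (Node us)
  show ?case
  proof (cases "\<exists>i<n. f [i] = a")
    case True
    then show ?thesis using Node.prems by (auto simp: build_child_image[OF ac])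
  next
    case False
    have prefix_snoc: "prefix (a @ [j]) x \<Longrightarrow> prefix a x" for j x
      by (auto dest: append_prefixD)
    have filter_snoc: "filter (\<lambda>(i, r). prefix (a @ [j]) (f [i])) q =
        filter (\<lambda>(i, r). prefix (a @ [j]) (f [i])) (filter (\<lambda>(i, r). prefix a (f [i])) q)" for j q
      by (auto simp: filter_filter intro!: filter_cong dest: prefix_snoc)
    have "reindex f a p = reindex f a (filter (\<lambda>(i, r). prefix a (f [i])) p)"
      using reindex_filter[of a f "\<lambda>i. prefix a (f [i])"] prefix_snoc by metis
    also have "\<dots> = reindex f a p'"
      using reindex_filter[of a f "\<lambda>i. prefix a (f [i])"] prefix_snoc Node.prems(2) by metis
    moreover have "build Ls f n p uj (a @ [j]) = build Ls' f n p' uj (a @ [j])"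
      if "(j, uj) \<in> set (zip [0..<length us] us)" for j uj
    proof (rule Node.IH)
      show "uj \<in> set us" using that by (rule set_zip_rightD)
      show "\<forall>i<n. prefix (a @ [j]) (f [i]) \<longrightarrow> Ls ! i = Ls' ! i"
        using Node.prems(1) prefix_snoc by blast
      show "filter (\<lambda>(i, r). prefix (a @ [j]) (f [i])) p = filter (\<lambda>(i, r). prefix (a @ [j]) (f [i])) p'"
        using Node.prems(2) filter_snoc by metis
    qed
    then have "build_children Ls f n p us a = build_children Ls' f n p' us a"
      unfolding build_children_def by (auto intro!: map_cong)
    ultimately show ?thesis using False by (simp add: build_Node)
  qed
qed

lemma build_children_update:
  assumes ac: "child_images_antichain f n t2" and i0: "i0 < n"
    and j0: "prefix (a @ [j0]) (f [i0])" "j0 < length us"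
    and Ls: "\<forall>i<n. i \<noteq> i0 \<longrightarrow> Ls' ! i = Ls ! i"
    and p: "filter (\<lambda>(i, r). i \<noteq> i0) p' = filter (\<lambda>(i, r). i \<noteq> i0) p"
  shows "build_children Ls' f n p' us a =
    (build_children Ls f n p us a)[j0 := build Ls' f n p' (us ! j0) (a @ [j0])]"
proof (rule nth_equalityI)
  fix j assume "j < length (build_children Ls' f n p' us a)"
  then have j: "j < length us" by simp
  show "build_children Ls' f n p' us a ! j =
      (build_children Ls f n p us a)[j0 := build Ls' f n p' (us ! j0) (a @ [j0])] ! j"
  proof (cases "j = j0")
    case True
    have "\<exists>i<n. prefix (a @ [j0]) (f [i])" using i0 j0(1) by blast
    with True j0(2) show ?thesis by (simp add: nth_build_children)
  next
    case False
    then have off_i0: "prefix (a @ [j]) (f [i]) \<Longrightarrow> i \<noteq> i0" for i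
      using j0(1) prefix_snoc_unique by metis
    have filter_off_i0: "filter (\<lambda>(i, r). prefix (a @ [j]) (f [i])) q =
        filter (\<lambda>(i, r). prefix (a @ [j]) (f [i])) (filter (\<lambda>(i, r). i \<noteq> i0) q)" for q
      by (auto simp: filter_filter intro!: filter_cong dest: off_i0)
    have "build Ls' f n p' (us ! j) (a @ [j]) = build Ls f n p (us ! j) (a @ [j])"
    proof (rule build_cong[OF ac])
      show "\<forall>i<n. prefix (a @ [j]) (f [i]) \<longrightarrow> Ls' ! i = Ls ! i"
        using Ls off_i0 by blast
      show "filter (\<lambda>(i, r). prefix (a @ [j]) (f [i])) p' = filter (\<lambda>(i, r). prefix (a @ [j]) (f [i])) p"
        by (subst (1 2) filter_off_i0) (simp only: p)
    qed
    with False j show ?thesis by (auto simp: nth_build_children)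
  qed
qed simp

lemma child_images_antichain_not_image:
  assumes "child_images_antichain f n t2" and "i0 < n" and "f [i0] = a @ j # js"
  shows "\<forall>i<n. f [i] \<noteq> a"
proof (intro allI impI notI)
  fix i assume "i < n" "f [i] = a"
  then have "i = i0" using assms unfolding child_images_antichain_def by auto
  with assms(3) \<open>f [i] = a\<close> show False by simp
qed

lemma child_images_antichain_path_node:
  assumes "child_images_antichain f n t2" and "i0 < n" and "f [i0] = a @ j # js"
  obtains us where "subtree t2 a = Node us" and "j < length us"
    and "us ! j = subtree t2 (a @ [j])"
proof -
  have "valid_addr t2 (a @ j # js)"
    using assms unfolding child_images_antichain_def by metis
  then obtain us where "subtree t2 a = Node us" "j < length us"
    by (rule valid_addr_append_ConsE)
  then show ?thesis by (intro that) (simp_all add: subtree_append)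
qed

lemma pop_build:
  assumes ac: "child_images_antichain f n t2" and len: "length Ls = n"
    and pp: "pifo_pop p = Some (i0, p')" and i0: "i0 < n"
  shows "f [i0] = a @ js \<Longrightarrow> pop (build Ls f n p (subtree t2 a) a) =
    map_option (apsnd (\<lambda>L'. build (Ls[i0 := L']) f n p' (subtree t2 a) a)) (pop (Ls ! i0))"
proof (induction js arbitrary: a)
  case Nil
  then have "a = f [i0]" by simp
  with ac i0 len show ?case by (simp add: build_child_image option.map_id flip: id_def)
next
  case (Cons j0 js)
  obtain us where us: "subtree t2 a = Node us" "j0 < length us" "us ! j0 = subtree t2 (a @ [j0])"
    using ac i0 Cons.prems by (rule child_images_antichain_path_node)
  have not_image: "\<forall>i<n. f [i] \<noteq> a"
    using ac i0 Cons.prems by (rule child_images_antichain_not_image)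
  have j0: "prefix (a @ [j0]) (f [i0])" using Cons.prems by simp
  have reindex_pp: "pifo_pop (reindex f a p) = Some (j0, reindex f a p')"
    using pp j0 by (rule reindex_pop)
  have "filter (\<lambda>(i, r). i \<noteq> i0) p' = filter (\<lambda>(i, r). i \<noteq> i0) p"
    using pp by (rule pifo_pop_SomeE) auto
  then have children: "build_children (Ls[i0 := L']) f n p' us a =
      (build_children Ls f n p us a)[j0 := build (Ls[i0 := L']) f n p' (us ! j0) (a @ [j0])]" for L'
    using ac i0 j0 us(2) by (intro build_children_update) auto
  have "pop (build Ls f n p (subtree t2 a) a) =
      map_option (apsnd (\<lambda>q'. Internal ((build_children Ls f n p us a)[j0 := q']) (reindex f a p')))
        (pop (build Ls f n p (subtree t2 (a @ [j0])) (a @ [j0])))"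
    using us i0 j0 by (simp add: build_Node[OF not_image] reindex_pp
        nth_build_children exI[of _ i0] split: option.split)
  also have "\<dots> = map_option (apsnd (\<lambda>L'. build (Ls[i0 := L']) f n p' (subtree t2 a) a)) (pop (Ls ! i0))"
    using Cons.IH[of "a @ [j0]"] Cons.prems us
    by (simp add: option.map_comp apsnd_compose comp_def build_Node[OF not_image] children)
  finally show ?case .
qed

fun path_via :: "nat list \<Rightarrow> 'r \<Rightarrow> 'r path \<Rightarrow> 'r path" where
  "path_via [] r pt = pt"
| "path_via (j # js) r pt = PStep j r (path_via js r pt)"

lemma is_path_path_via:
  "valid_addr t js \<Longrightarrow> is_path (subtree t js) pt \<Longrightarrow> is_path t (path_via js r pt)"
  by (induction t js rule: valid_addr.induct) auto

lemma push_build: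
  assumes ac: "child_images_antichain f n t2" and len: "length Ls = n" and i0: "i0 < n"
  shows "f [i0] = a @ js \<Longrightarrow> push (build Ls f n p (subtree t2 a) a) x (path_via js r pt) =
    build (Ls[i0 := push (Ls ! i0) x pt]) f n (p @ [(i0, r)]) (subtree t2 a) a"
proof (induction js arbitrary: a)
  case Nil
  then have "a = f [i0]" by simp
  with ac i0 len show ?case by (simp add: build_child_image)
next
  case (Cons j0 js)
  let ?Ls' = "Ls[i0 := push (Ls ! i0) x pt]"
  obtain us where us: "subtree t2 a = Node us" "j0 < length us" "us ! j0 = subtree t2 (a @ [j0])"
    using ac i0 Cons.prems by (rule child_images_antichain_path_node)
  have not_image: "\<forall>i<n. f [i] \<noteq> a"
    using ac i0 Cons.prems by (rule child_images_antichain_not_image)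
  have j0: "prefix (a @ [j0]) (f [i0])" using Cons.prems by simp
  have "build_children ?Ls' f n (p @ [(i0, r)]) us a =
      (build_children Ls f n p us a)[j0 := build ?Ls' f n (p @ [(i0, r)]) (us ! j0) (a @ [j0])]"
    using ac i0 j0 us(2) by (intro build_children_update) auto
  moreover have "reindex f a (p @ [(i0, r)]) = pifo_push (reindex f a p) j0 r"
    using reindex_Cons_prefix[of a j0 f i0 r "[]", OF j0] by (simp add: pifo_push_def)
  moreover have "push (build Ls f n p (us ! j0) (a @ [j0])) x (path_via js r pt) =
      build ?Ls' f n (p @ [(i0, r)]) (us ! j0) (a @ [j0])"
    using Cons.IH[of "a @ [j0]"] Cons.prems us(3) by simp
  ultimately show ?case
    using us i0 j0 by (simp add: build_Node[OF not_image] nth_build_children exI[of _ i0])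
qed

lemma pop_build_Nil: "\<forall>i<n. f [i] \<noteq> a \<Longrightarrow> pop (build Ls f n [] u a) = None"
  by (cases u) (auto simp: build_Node build_Star)

lemma wf_tree_build:
  assumes ac: "child_images_antichain f n t2"
    and Ls: "\<forall>i<n. wf_tree (subtree t2 (f [i])) (Ls ! i)" and p: "\<forall>(i, r)\<in>set p. i < n"
  shows "wf_tree (subtree t2 a) (build Ls f n p (subtree t2 a) a)"
proof (induction "subtree t2 a" arbitrary: a)
  case Star
  then have "subtree t2 a = Star" by simp
  with ac Ls show ?case by (cases "\<exists>i<n. f [i] = a") (auto simp: build_child_image build_Star)
next
  case (Node us)
  show ?case
  proof (cases "\<exists>i<n. f [i] = a")
    case True
    with ac Ls show ?thesis by (auto simp: build_child_image)
  next
    case False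
    have "wf_tree (us ! j) (build_children Ls f n p us a ! j)" if "j < length us" for j
    proof -
      have "us ! j = subtree t2 (a @ [j])"
        by (simp add: subtree_append flip: Node.hyps(2))
      with Node.hyps(1)[of "a @ [j]"] nth_mem[OF that] that show ?thesis
        by (auto simp: nth_build_children wf_tree_empty_tree)
    qed
    moreover have "j < length us" if jr: "(j, r) \<in> set (reindex f a p)" for j r
    proof -
      obtain i where i: "(i, r) \<in> set p" "prefix (a @ [j]) (f [i])"
        using in_set_reindexD[OF jr] by blast
      then obtain js where "f [i] = a @ j # js" by (auto simp: prefix_def)
      moreover have "i < n" using i(1) p by auto
      ultimately show ?thesis
        using ac Node.hyps(2) by (auto elim: child_images_antichain_path_node)
    qed
    ultimately show ?thesis using False by (auto simp: build_Node simp flip: Node.hyps(2))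
  qed
qed

lemma embedding_valid_addr: "embedding t1 t2 f \<Longrightarrow> a \<in> addr t1 \<Longrightarrow> valid_addr t2 (f a)"
  unfolding embedding_def addr_def by blast

lemma embedding_eq_iff:
  "embedding t1 t2 f \<Longrightarrow> a \<in> addr t1 \<Longrightarrow> a' \<in> addr t1 \<Longrightarrow>
    f a = f a' \<longleftrightarrow> a = a'"
  unfolding embedding_def by (auto dest: inj_onD)

lemma embedding_prefix_iff:
  "embedding t1 t2 f \<Longrightarrow> a \<in> addr t1 \<Longrightarrow> a' \<in> addr t1 \<Longrightarrow>
    prefix (f a) (f a') \<longleftrightarrow> prefix a a'"
  unfolding embedding_def by blast

lemma embedding_Star:
  assumes "embedding Star t2 f"
  shows "t2 = Star"
proof -
  have "[] \<in> addr Star" by (simp add: addr_def)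
  with assms have "subtree t2 (f []) = Star" "f [] = []" unfolding embedding_def by auto
  then show ?thesis by simp
qed

lemma embedding_child_images_antichain:
  assumes e: "embedding (Node ts) t2 f"
  shows "child_images_antichain f (length ts) t2"
  unfolding child_images_antichain_def
proof (intro conjI allI impI)
  fix i assume i: "i < length ts"
  then have addr: "[i] \<in> addr (Node ts)" "[] \<in> addr (Node ts)" by (simp_all add: addr_def)
  show "valid_addr t2 (f [i])" using e addr(1) by (rule embedding_valid_addr)
  from e have "f [] = []" unfolding embedding_def by simp
  with embedding_eq_iff[OF e addr] show "f [i] \<noteq> []" by simp
next
  fix i i' assume "i < length ts" "i' < length ts" "prefix (f [i]) (f [i'])"
  with embedding_prefix_iff[OF e, of "[i]" "[i']"] have "prefix [i] [i']" by (simp add: addr_def)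
  then show "i = i'" by simp
qed

lemma embedding_Cons_eq:
  assumes "embedding (Node ts) t2 f" and "i < length ts" and "a \<in> addr (ts ! i)"
  shows "f (i # a) = f [i] @ sub_emb f i a"
proof -
  have "[i] \<in> addr (Node ts)" "i # a \<in> addr (Node ts)"
    using assms(2,3) by (simp_all add: addr_def)
  with assms(1) have "prefix (f [i]) (f (i # a))" by (simp add: embedding_prefix_iff)
  then show ?thesis unfolding sub_emb_def by (auto simp: prefix_def)
qed

lemma embedding_sub_emb:
  assumes e: "embedding (Node ts) t2 f" and i: "i < length ts"
  shows "embedding (ts ! i) (subtree t2 (f [i])) (sub_emb f i)"
proof -
  have addr: "i # a \<in> addr (Node ts) \<longleftrightarrow> a \<in> addr (ts ! i)" for a
    using i by (simp add: addr_def)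
  note f_Cons = embedding_Cons_eq[OF e i]
  show ?thesis unfolding embedding_def
  proof (intro conjI ballI)
    show "sub_emb f i ` addr (ts ! i) \<subseteq> addr (subtree t2 (f [i]))"
    proof
      fix b assume "b \<in> sub_emb f i ` addr (ts ! i)"
      then obtain a where a: "a \<in> addr (ts ! i)" "b = sub_emb f i a" by blast
      have "valid_addr t2 (f [i] @ b)"
        using embedding_valid_addr[OF e, of "i # a"] addr a by (simp add: f_Cons)
      then show "b \<in> addr (subtree t2 (f [i]))" by (simp add: addr_def valid_addr_append)
    qed
    show "inj_on (sub_emb f i) (addr (ts ! i))"
    proof (rule inj_onI)
      fix a a' assume a: "a \<in> addr (ts ! i)" "a' \<in> addr (ts ! i)" "sub_emb f i a = sub_emb f i a'"
      then have "f (i # a) = f (i # a')" by (simp add: f_Cons)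
      with embedding_eq_iff[OF e] addr a(1,2) have "i # a = i # a'" by blast
      then show "a = a'" by simp
    qed
    show "sub_emb f i [] = []"
      using e unfolding embedding_def sub_emb_def by simp
  next
    fix a assume a: "a \<in> addr (ts ! i)"
    show "subtree (ts ! i) a = Star \<longrightarrow> subtree (subtree t2 (f [i])) (sub_emb f i a) = Star"
    proof
      assume "subtree (ts ! i) a = Star"
      then have "subtree (Node ts) (i # a) = Star" by simp
      with e addr a have "subtree t2 (f (i # a)) = Star" unfolding embedding_def by blast
      then show "subtree (subtree t2 (f [i])) (sub_emb f i a) = Star"
        by (simp add: f_Cons[OF a] subtree_append)
    qed
  next
    fix a a' assume a: "a \<in> addr (ts ! i)" "a' \<in> addr (ts ! i)"
    have "prefix a a' \<longleftrightarrow> prefix (i # a) (i # a')" by simp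
    also have "\<dots> \<longleftrightarrow> prefix (f (i # a)) (f (i # a'))"
      using embedding_prefix_iff[OF e] addr a by blast
    also have "\<dots> \<longleftrightarrow> prefix (sub_emb f i a) (sub_emb f i a')"
      by (simp add: f_Cons a)
    finally show "prefix a a' \<longleftrightarrow> prefix (sub_emb f i a) (sub_emb f i a')" .
  qed
qed

section \<open>Lifting commutes with pop and push\<close>

definition lift_children :: "topo list \<Rightarrow> topo \<Rightarrow> (nat list \<Rightarrow> nat list)
    \<Rightarrow> ('p, 'r) ptree list \<Rightarrow> ('p, 'r) ptree list" where
  "lift_children ts t2 f qs =
     map (\<lambda>(i, ti, qi). lift ti (subtree t2 (f [i])) (sub_emb f i) qi) (zip [0..<length ts] (zip ts qs))"

lemma lift_Internal:
  "lift (Node ts) t2 f (Internal qs p) = build (lift_children ts t2 f qs) f (length ts) p t2 []"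
  by (simp add: lift_children_def)

declare lift.simps(3) [simp del]

lemma length_lift_children [simp]:
  "length qs = length ts \<Longrightarrow> length (lift_children ts t2 f qs) = length ts"
  by (simp add: lift_children_def)

lemma nth_lift_children:
  "length qs = length ts \<Longrightarrow> i < length ts \<Longrightarrow>
    lift_children ts t2 f qs ! i = lift (ts ! i) (subtree t2 (f [i])) (sub_emb f i) (qs ! i)"
  by (simp add: lift_children_def)

lemma lift_children_update:
  "length qs = length ts \<Longrightarrow> i < length ts \<Longrightarrow> lift_children ts t2 f (qs[i := q']) =
    (lift_children ts t2 f qs)[i := lift (ts ! i) (subtree t2 (f [i])) (sub_emb f i) q']"
  by (rule nth_equalityI) (auto simp: nth_lift_children nth_list_update)

lemma wf_tree_lift:
  "embedding t1 t2 f \<Longrightarrow> wf_tree t1 q \<Longrightarrow> wf_tree t2 (lift t1 t2 f q)"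
proof (induction t1 arbitrary: t2 f q)
  case Star
  then have "t2 = Star" by (blast dest: embedding_Star)
  with Star.prems(2) show ?case by simp
next
  case (Node ts)
  then obtain qs p where q: "q = Internal qs p" by (cases q) auto
  have ac: "child_images_antichain f (length ts) t2"
    using Node.prems(1) by (rule embedding_child_images_antichain)
  have "\<forall>i<length ts. wf_tree (subtree t2 (f [i])) (lift_children ts t2 f qs ! i)"
    using Node.IH[OF nth_mem embedding_sub_emb[OF Node.prems(1)]] Node.prems(2) q
    by (simp add: nth_lift_children)
  with ac Node.prems(2) q show ?case
    using wf_tree_build[of f "length ts" t2 "lift_children ts t2 f qs" p "[]"]
    by (simp add: lift_Internal)
qed

lemma pop_lift:
  "embedding t1 t2 f \<Longrightarrow> wf_tree t1 q \<Longrightarrow>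
    pop (lift t1 t2 f q) = map_option (apsnd (lift t1 t2 f)) (pop q)"
proof (induction t1 arbitrary: t2 f q)
  case Star
  then have "t2 = Star" by (blast dest: embedding_Star)
  then show ?case by (simp add: option.map_id flip: id_def)
next
  case (Node ts)
  then obtain qs p where q: "q = Internal qs p" by (cases q) auto
  have wf: "length qs = length ts" "\<forall>(i, r)\<in>set p. i < length ts"
    using Node.prems(2) q by auto
  have ac: "child_images_antichain f (length ts) t2"
    using Node.prems(1) by (rule embedding_child_images_antichain)
  show ?case
  proof (cases "pifo_pop p")
    case None
    moreover have "\<forall>i<length ts. f [i] \<noteq> []" using ac by (simp add: child_images_antichain_def)
    ultimately show ?thesis by (simp add: q lift_Internal pop_build_Nil)
  next
    case (Some ip)
    then obtain i p' where pp: "pifo_pop p = Some (i, p')" by (cases ip) auto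
    have i: "i < length ts" using pp wf(2) by (auto elim: pifo_pop_SomeE)
    have "pop (lift (Node ts) t2 f q) =
        map_option (apsnd (\<lambda>L'. build ((lift_children ts t2 f qs)[i := L']) f (length ts) p' t2 []))
          (pop (lift (ts ! i) (subtree t2 (f [i])) (sub_emb f i) (qs ! i)))"
      using pop_build[OF ac length_lift_children[OF wf(1)] pp i, where a="[]" and js="f [i]"] wf(1) i
      by (simp add: q lift_Internal nth_lift_children)
    also have "\<dots> = map_option (apsnd (lift (Node ts) t2 f)) (pop q)"
      using Node.IH[OF nth_mem[OF i] embedding_sub_emb[OF Node.prems(1) i]] Node.prems(2) q i wf(1)
      by (simp add: option.map_comp apsnd_compose comp_def lift_Internal lift_children_update pp
          split: option.split)
    finally show ?thesis .
  qed
qed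

lemma push_lift:
  "embedding t1 t2 f \<Longrightarrow> wf_tree t1 q \<Longrightarrow> is_path t1 pt \<Longrightarrow>
    \<exists>pt2. is_path t2 pt2 \<and> push (lift t1 t2 f q) x pt2 = lift t1 t2 f (push q x pt)"
proof (induction t1 arbitrary: t2 f q pt)
  case Star
  then have "t2 = Star" by (blast dest: embedding_Star)
  with Star.prems(3) show ?case by auto
next
  case (Node ts)
  then obtain qs p i r pt' where q: "q = Internal qs p" and pt: "pt = PStep i r pt'"
    by (cases q; cases pt) auto
  have wf: "length qs = length ts" "wf_tree (ts ! i) (qs ! i)"
    and i: "i < length ts" "is_path (ts ! i) pt'"
    using Node.prems q pt by auto
  have ac: "child_images_antichain f (length ts) t2"
    using Node.prems(1) by (rule embedding_child_images_antichain)
  obtain pt2 where pt2: "is_path (subtree t2 (f [i])) pt2"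
    "push (lift (ts ! i) (subtree t2 (f [i])) (sub_emb f i) (qs ! i)) x pt2 =
     lift (ts ! i) (subtree t2 (f [i])) (sub_emb f i) (push (qs ! i) x pt')"
    using Node.IH[OF nth_mem[OF i(1)] embedding_sub_emb[OF Node.prems(1) i(1)] wf(2) i(2)] by blast
  have "valid_addr t2 (f [i])" using ac i(1) by (simp add: child_images_antichain_def)
  then have "is_path t2 (path_via (f [i]) r pt2)" using pt2(1) by (rule is_path_path_via)
  moreover have
    "push (lift (Node ts) t2 f q) x (path_via (f [i]) r pt2) = lift (Node ts) t2 f (push q x pt)"
    using push_build[OF ac length_lift_children[OF wf(1)] i(1), where a="[]" and js="f [i]"]
      wf(1) i(1) pt2(2)
    by (simp add: q pt lift_Internal nth_lift_children lift_children_update pifo_push_def)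
  ultimately show ?case by blast
qed

theorem theorem5p11:
  fixes t1 t2 :: topo and f :: "nat list \<Rightarrow> nat list"
    and q :: "('p, 'r::linorder) ptree"
  assumes "embedding t1 t2 f"
    and "wf_tree t1 q"
  shows "simulated_by t1 t2 q (lift t1 t2 f q)"
  using wf_tree_lift[OF assms(1)] pop_lift[OF assms(1)] push_lift[OF assms(1)] assms(2)
  by (rule simulated_by_commuting_map)

end
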